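(* Let $M$ be a $d$-dimensional simplicial complex and $N$ a $(d-1)$-dimensional induced subcomplex of $M$, and suppose both $M$ and $N$ are normal pseudomanifolds. Then (a) for any vertex $u$ of $N$ and any vertex $v$ of the simplicial complement $C(N, M)$, there is a path $P$ in the edge graph of $M$ joining $u$ to $v$ such that $u$ is the only vertex of $P$ lying in $N$; and (b) $C(N, M)$ has at most two connected components.
   Context: A simplicial complex is a finite set of finite sets closed under taking subsets; an element of size $i+1$ is an $i$-face (the empty set is the unique $(-1)$-face); $V(X)$ is the vertex set. For $A\subseteq V(M)$ the induced subcomplex $M[A]$ consists of all faces of $M$ contained in $A$; $N$ is an induced subcomplex if $N=M[V(N)]$. The simplicial complement of an induced subcomplex $N$ is $C(N,M)=M[V(M)\setminus V(N)]$. A pure $d$-dimensional complex has all maximal faces (facets) of dimension $d$. The link of a face $\alpha$ is $\mathrm{lk}_X(\alpha)=\{\beta\in X:\beta\cap\alpha=\emptyset,\ \alpha\cup\beta\in X\}$. A complex is connected if its edge graph is connected. A $d$-dimensional normal pseudomanifold ($d\ge1$) is a pure $d$-dimensional simplicial complex in which every $(d-1)$-face lies in exactly two facets and the link of every face of dimension $\le d-2$ (including the empty face, whose link is the whole complex) is connected. *)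

theory Defs
  imports Main
begin

definition simplicial_complex :: "'a set set \<Rightarrow> bool" where
  "simplicial_complex X \<longleftrightarrow> finite X \<and> (\<forall>\<sigma>\<in>X. finite \<sigma>) \<and> (\<forall>\<sigma>\<in>X. \<forall>\<tau>. \<tau> \<subseteq> \<sigma> \<longrightarrow> \<tau> \<in> X)"

definition vertices :: "'a set set \<Rightarrow> 'a set" where
  "vertices X = \<Union>X"

definition induced :: "'a set set \<Rightarrow> 'a set \<Rightarrow> 'a set set" where
  "induced M A = {\<sigma> \<in> M. \<sigma> \<subseteq> A}"

definition induced_subcomplex :: "'a set set \<Rightarrow> 'a set set \<Rightarrow> bool" where
  "induced_subcomplex N M \<longleftrightarrow> N = induced M (vertices N)"

definition simp_complement :: "'a set set \<Rightarrow> 'a set set \<Rightarrow> 'a set set" where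
  "simp_complement N M = induced M (vertices M - vertices N)"

definition link :: "'a set set \<Rightarrow> 'a set \<Rightarrow> 'a set set" where
  "link X \<alpha> = {\<beta> \<in> X. \<beta> \<inter> \<alpha> = {} \<and> \<alpha> \<union> \<beta> \<in> X}"

definition facets :: "'a set set \<Rightarrow> 'a set set" where
  "facets X = {\<sigma> \<in> X. \<forall>\<tau>\<in>X. \<sigma> \<subseteq> \<tau> \<longrightarrow> \<tau> = \<sigma>}"

definition pure_dim :: "'a set set \<Rightarrow> nat \<Rightarrow> bool" where
  "pure_dim X d \<longleftrightarrow> (\<exists>\<sigma>\<in>X. card \<sigma> = d + 1) \<and> (\<forall>\<sigma>\<in>facets X. card \<sigma> = d + 1)"

definition adj :: "'a set set \<Rightarrow> 'a \<Rightarrow> 'a \<Rightarrow> bool" where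
  "adj X u v \<longleftrightarrow> u \<noteq> v \<and> {u, v} \<in> X"

definition connected_cx :: "'a set set \<Rightarrow> bool" where
  "connected_cx X \<longleftrightarrow> (\<forall>u\<in>vertices X. \<forall>v\<in>vertices X. (adj X)\<^sup>*\<^sup>* u v)"

definition components :: "'a set set \<Rightarrow> 'a set set" where
  "components X = (\<lambda>v. {w \<in> vertices X. (adj X)\<^sup>*\<^sup>* v w}) ` vertices X"

text \<open>d-dimensional normal pseudomanifold (d \<ge> 1). Faces of dimension \<le> d-2 are those of card \<le> d-1.\<close>
definition normal_pseudomanifold :: "'a set set \<Rightarrow> nat \<Rightarrow> bool" where
  "normal_pseudomanifold X d \<longleftrightarrow> d \<ge> 1 \<and> simplicial_complex X \<and> pure_dim X d \<and>
     (\<forall>\<sigma>\<in>X. card \<sigma> = d \<longrightarrow> card {\<tau> \<in> X. card \<tau> = d + 1 \<and> \<sigma> \<subseteq> \<tau>} = 2) \<and>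
     (\<forall>\<sigma>\<in>X. card \<sigma> \<le> d - 1 \<longrightarrow> connected_cx (link X \<sigma>))"

definition edge_path :: "'a set set \<Rightarrow> 'a list \<Rightarrow> 'a \<Rightarrow> 'a \<Rightarrow> bool" where
  "edge_path X p u v \<longleftrightarrow> p \<noteq> [] \<and> hd p = u \<and> last p = v \<and> distinct p \<and>
     set p \<subseteq> vertices X \<and> (\<forall>i. Suc i < length p \<longrightarrow> adj X (p ! i) (p ! Suc i))"

end

theory Submission
  imports Defs
begin

(*
  Say that u \<in> N reaches v \<in> C(N,M) if some neighbour c of u outside N is joined to v inside
  C(N,M); the path u, c, ..., v then meets N only in u.
  Reachability propagates along an edge uq of N: the link of u in M is a (d-1)-dimensional normal
  pseudomanifold containing the link of u in N as an induced subcomplex, so by induction q reaches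
  c inside that link, and the link complement is part of C(N,M). Since M is connected, the first
  vertex of N on an M-path from v into N reaches v, and since N is connected every vertex of N
  does. This gives (a), and it shows that every component of C(N,M) contains a neighbour of u
  outside N, i.e. a vertex of the complement of the links at u; so C(N,M) has at most as many
  components as that complement, which by induction has at most two. The base case d = 1 rests on
  the fact that a one-dimensional normal pseudomanifold (a cycle) stays connected after deleting
  a vertex, which follows from a parity argument.
*)

lemma simplicial_complex_downward_closed:
  "simplicial_complex X \<Longrightarrow> \<sigma> \<in> X \<Longrightarrow> \<tau> \<subseteq> \<sigma> \<Longrightarrow> \<tau> \<in> X"
  by (auto simp: simplicial_complex_def)

lemma simplicial_complex_finite_face: "simplicial_complex X \<Longrightarrow> \<sigma> \<in> X \<Longrightarrow> finite \<sigma>"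
  by (auto simp: simplicial_complex_def)

lemma finite_vertices: "simplicial_complex X \<Longrightarrow> finite (vertices X)"
  by (auto simp: simplicial_complex_def vertices_def)

lemma face_subset_vertices: "\<sigma> \<in> X \<Longrightarrow> \<sigma> \<subseteq> vertices X"
  by (auto simp: vertices_def)

lemma singleton_in_complex_iff: "simplicial_complex X \<Longrightarrow> {x} \<in> X \<longleftrightarrow> x \<in> vertices X"
  by (auto simp: simplicial_complex_def vertices_def)

lemma vertices_mono: "Y \<subseteq> X \<Longrightarrow> vertices Y \<subseteq> vertices X"
  by (auto simp: vertices_def)

lemma adj_commute: "adj X x y \<longleftrightarrow> adj X y x"
  by (auto simp: adj_def insert_commute)

lemma adj_rtranclp_commute: "(adj X)\<^sup>*\<^sup>* x y \<Longrightarrow> (adj X)\<^sup>*\<^sup>* y x"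
  by (rule sympD[OF symp_rtranclp]) (auto intro: sympI simp: adj_commute)

lemma adj_vertices: "adj X x y \<Longrightarrow> x \<in> vertices X \<and> y \<in> vertices X"
  by (auto simp: adj_def vertices_def)

lemma finite_neighbours:
  assumes "simplicial_complex X" shows "finite {z. adj X w z}"
proof -
  have "{z. adj X w z} \<subseteq> vertices X"
    by (auto dest: adj_vertices)
  then show ?thesis
    using finite_vertices[OF assms] by (rule finite_subset)
qed

lemma adj_mono: "Y \<subseteq> X \<Longrightarrow> adj Y x y \<Longrightarrow> adj X x y"
  by (auto simp: adj_def)

lemma induced_subset: "induced X A \<subseteq> X"
  by (auto simp: induced_def)

lemma simplicial_complex_induced: "simplicial_complex X \<Longrightarrow> simplicial_complex (induced X A)"
  unfolding simplicial_complex_def induced_def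
  by (metis (no_types, lifting) finite_subset mem_Collect_eq order_trans subsetI)

lemma vertices_induced:
  assumes "simplicial_complex X" shows "vertices (induced X A) = vertices X \<inter> A"
proof -
  have "{x} \<in> X" if "x \<in> vertices X" for x
    using singleton_in_complex_iff[OF assms] that by blast
  then show ?thesis by (fastforce simp: induced_def vertices_def)
qed

lemma adj_induced: "adj (induced X A) x y \<longleftrightarrow> adj X x y \<and> x \<in> A \<and> y \<in> A"
  by (auto simp: induced_def adj_def)

lemma induced_subcomplex_eq: "induced_subcomplex N M \<Longrightarrow> induced M (vertices N) = N"
  unfolding induced_subcomplex_def by (rule sym)

lemma induced_subcomplex_subset: "induced_subcomplex N M \<Longrightarrow> N \<subseteq> M"
  using induced_subset[of M "vertices N"] by (simp only: induced_subcomplex_eq)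

lemma induced_subcomplexD: "induced_subcomplex N M \<Longrightarrow> \<sigma> \<in> M \<Longrightarrow> \<sigma> \<subseteq> vertices N \<Longrightarrow> \<sigma> \<in> N"
  by (drule induced_subcomplex_eq) (auto simp: induced_def)

lemma simplicial_complex_induced_subcomplex:
  "simplicial_complex M \<Longrightarrow> induced_subcomplex N M \<Longrightarrow> simplicial_complex N"
  using simplicial_complex_induced[of M "vertices N"] by (simp only: induced_subcomplex_eq)

lemma adj_induced_subcomplex:
  "induced_subcomplex N M \<Longrightarrow> adj N x y \<longleftrightarrow> adj M x y \<and> x \<in> vertices N \<and> y \<in> vertices N"
  using adj_induced[of M "vertices N" x y] by (simp only: induced_subcomplex_eq)

lemma vertices_simp_complement:
  "simplicial_complex M \<Longrightarrow> vertices (simp_complement N M) = vertices M - vertices N"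
  by (auto simp: simp_complement_def vertices_induced)

lemma adj_simp_complement:
  "adj (simp_complement N M) x y \<longleftrightarrow> adj M x y \<and> x \<notin> vertices N \<and> y \<notin> vertices N"
  using adj_vertices by (fastforce simp: simp_complement_def adj_induced)

lemma simplicial_complex_simp_complement:
  "simplicial_complex M \<Longrightarrow> simplicial_complex (simp_complement N M)"
  unfolding simp_complement_def by (rule simplicial_complex_induced)

definition component :: "'a set set \<Rightarrow> 'a \<Rightarrow> 'a set" where
  "component X v = {w \<in> vertices X. (adj X)\<^sup>*\<^sup>* v w}"

lemma components_eq_image: "components X = component X ` vertices X"
  by (simp add: components_def component_def)

lemma component_eq:
  assumes "(adj X)\<^sup>*\<^sup>* v w" shows "component X v = component X w"
  using rtranclp_trans[OF assms] rtranclp_trans[OF adj_rtranclp_commute[OF assms]]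
  by (auto simp: component_def)

lemma card_components_le:
  assumes "finite (vertices Y)" and "\<And>x y. adj Y x y \<Longrightarrow> adj X x y"
    and "\<And>v. v \<in> vertices X \<Longrightarrow> \<exists>s\<in>vertices Y. (adj X)\<^sup>*\<^sup>* s v"
  shows "card (components X) \<le> card (components Y)"
proof -
  define rep where "rep L = component X (SOME s. s \<in> L)" for L
  have "components X \<subseteq> rep ` components Y"
  proof
    fix K assume "K \<in> components X"
    then obtain v where v: "v \<in> vertices X" "K = component X v"
      by (auto simp: components_eq_image)
    then obtain s where s: "s \<in> vertices Y" "(adj X)\<^sup>*\<^sup>* s v"
      using assms(3) by blast
    have "s \<in> component Y s"
      using s(1) by (simp add: component_def)
    then have "(SOME s'. s' \<in> component Y s) \<in> component Y s"
      by (rule someI)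
    then have "(adj Y)\<^sup>*\<^sup>* s (SOME s'. s' \<in> component Y s)"
      by (simp add: component_def)
    then have "(adj X)\<^sup>*\<^sup>* s (SOME s'. s' \<in> component Y s)"
      using assms(2) by (metis mono_rtranclp)
    then have "rep (component Y s) = component X s"
      unfolding rep_def by (rule component_eq[symmetric])
    also have "\<dots> = K"
      using component_eq[OF s(2)] v(2) by simp
    finally have "rep (component Y s) = K" .
    then show "K \<in> rep ` components Y"
      using s(1) by (auto simp: components_eq_image)
  qed
  then show ?thesis
    using assms(1) by (intro surj_card_le) (auto simp: components_eq_image)
qed

lemma card_components_le_card_vertices:
  "simplicial_complex X \<Longrightarrow> card (components X) \<le> card (vertices X)"
  unfolding components_eq_image by (intro card_image_le finite_vertices)

lemma edge_path_mono: "Y \<subseteq> X \<Longrightarrow> edge_path Y p u v \<Longrightarrow> edge_path X p u v"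
  unfolding edge_path_def vertices_def by (blast intro: adj_mono)

lemma edge_path_Cons:
  assumes "edge_path X p w v" "adj X u w" "u \<notin> set p"
  shows "edge_path X (u # p) u v"
  unfolding edge_path_def
proof (intro conjI allI impI)
  show "adj X ((u # p) ! i) ((u # p) ! Suc i)" if "Suc i < length (u # p)" for i
    using assms that by (cases i) (auto simp: edge_path_def hd_conv_nth)
qed (use assms adj_vertices[OF assms(2)] in \<open>auto simp: edge_path_def\<close>)

lemma edge_path_of_rtranclp:
  assumes "(adj X)\<^sup>*\<^sup>* u v" "u \<in> vertices X"
  shows "\<exists>p. edge_path X p u v"
  using assms
proof (induction rule: converse_rtranclp_induct)
  case base
  then show ?case by (intro exI[of _ "[v]"]) (simp add: edge_path_def)
next
  case (step u w)
  obtain p where p: "edge_path X p w v"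
    using step.IH adj_vertices[OF step.hyps(1)] by blast
  show ?case
  proof (cases "u \<in> set p")
    case True
    then obtain i where i: "i < length p" "p ! i = u"
      by (metis in_set_conv_nth)
    have "edge_path X (drop i p) u v"
      unfolding edge_path_def
    proof (intro conjI allI impI)
      show "adj X (drop i p ! j) (drop i p ! Suc j)" if "Suc j < length (drop i p)" for j
        using p that by (simp add: edge_path_def)
    qed (use p i set_drop_subset[of i p] in \<open>auto simp: edge_path_def hd_drop_conv_nth\<close>)
    then show ?thesis ..
  next
    case False
    then show ?thesis using edge_path_Cons[OF p step.hyps(1)] by blast
  qed
qed

subsection \<open>Links of vertices\<close>

lemma link_subset: "link X \<alpha> \<subseteq> X"
  by (auto simp: link_def)

lemma link_singleton_iff: "\<beta> \<in> link X {p} \<longleftrightarrow> \<beta> \<in> X \<and> p \<notin> \<beta> \<and> insert p \<beta> \<in> X"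
  by (auto simp: link_def)

lemma simplicial_complex_link:
  assumes "simplicial_complex X" shows "simplicial_complex (link X \<alpha>)"
proof -
  have "\<tau> \<in> link X \<alpha>" if "\<beta> \<in> link X \<alpha>" "\<tau> \<subseteq> \<beta>" for \<beta> \<tau>
    using that simplicial_complex_downward_closed[OF assms, of "\<alpha> \<union> \<beta>" "\<alpha> \<union> \<tau>"]
      simplicial_complex_downward_closed[OF assms, of \<beta> \<tau>]
    by (auto simp: link_def)
  moreover have "finite (link X \<alpha>)"
    using assms finite_subset[OF link_subset] by (auto simp: simplicial_complex_def)
  moreover have "\<forall>\<sigma>\<in>link X \<alpha>. finite \<sigma>"
    using assms link_subset simplicial_complex_finite_face by blast
  ultimately show ?thesis
    unfolding simplicial_complex_def by blast
qed

lemma link_link: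
  assumes "simplicial_complex X" "\<sigma> \<in> link X {p}"
  shows "link (link X {p}) \<sigma> = link X (insert p \<sigma>)"
  using assms by (auto simp: link_def intro: simplicial_complex_downward_closed[OF assms(1)])

lemma vertices_link_singleton:
  assumes "simplicial_complex X" shows "vertices (link X {p}) = {z. adj X p z}"
proof
  show "vertices (link X {p}) \<subseteq> {z. adj X p z}"
  proof
    fix z assume "z \<in> vertices (link X {p})"
    then obtain \<beta> where "\<beta> \<in> link X {p}" "z \<in> \<beta>"
      by (auto simp: vertices_def)
    then show "z \<in> {z. adj X p z}"
      using simplicial_complex_downward_closed[OF assms, of "insert p \<beta>" "{p, z}"]
      by (auto simp: link_singleton_iff adj_def)
  qed
  show "{z. adj X p z} \<subseteq> vertices (link X {p})"
  proof
    fix z assume "z \<in> {z. adj X p z}"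
    then have "{z} \<in> link X {p}"
      using simplicial_complex_downward_closed[OF assms, of "{p, z}" "{z}"]
      by (auto simp: link_singleton_iff adj_def insert_commute)
    then show "z \<in> vertices (link X {p})"
      by (auto simp: vertices_def)
  qed
qed

lemma facets_link_singleton:
  assumes "simplicial_complex X"
  shows "\<tau> \<in> facets (link X {p}) \<longleftrightarrow> p \<notin> \<tau> \<and> insert p \<tau> \<in> facets X"
proof
  assume \<tau>: "\<tau> \<in> facets (link X {p})"
  then have "\<tau> \<in> link X {p}"
    by (simp add: facets_def)
  then have p: "p \<notin> \<tau>" and F: "insert p \<tau> \<in> X"
    by (simp_all add: link_singleton_iff)
  have "G = insert p \<tau>" if G: "G \<in> X" "insert p \<tau> \<subseteq> G" for G
  proof -
    have "G - {p} \<in> X"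
      using simplicial_complex_downward_closed[OF assms G(1)] by blast
    moreover have "insert p (G - {p}) = G"
      using G(2) by blast
    ultimately have "G - {p} \<in> link X {p}"
      using G(1) by (simp add: link_singleton_iff)
    moreover have "\<tau> \<subseteq> G - {p}"
      using G(2) p by blast
    ultimately have "G - {p} = \<tau>"
      using \<tau> by (simp add: facets_def)
    then show ?thesis
      using G(2) by blast
  qed
  then show "p \<notin> \<tau> \<and> insert p \<tau> \<in> facets X"
    using p F unfolding facets_def by blast
next
  assume "p \<notin> \<tau> \<and> insert p \<tau> \<in> facets X"
  then have p: "p \<notin> \<tau>" and F: "insert p \<tau> \<in> X"
    and F_max: "\<And>G. G \<in> X \<Longrightarrow> insert p \<tau> \<subseteq> G \<Longrightarrow> G = insert p \<tau>"
    by (auto simp: facets_def)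
  have "\<tau> \<in> X"
    using simplicial_complex_downward_closed[OF assms F] by blast
  then have \<tau>: "\<tau> \<in> link X {p}"
    using p F by (simp add: link_singleton_iff)
  have "\<sigma> = \<tau>" if \<sigma>: "\<sigma> \<in> link X {p}" "\<tau> \<subseteq> \<sigma>" for \<sigma>
  proof -
    have "p \<notin> \<sigma>" "insert p \<sigma> \<in> X"
      using \<sigma>(1) by (simp_all add: link_singleton_iff)
    then have "insert p \<sigma> = insert p \<tau>"
      using F_max \<sigma>(2) by blast
    then show ?thesis
      using \<open>p \<notin> \<sigma>\<close> p by (simp add: insert_ident)
  qed
  then show "\<tau> \<in> facets (link X {p})"
    using \<tau> unfolding facets_def by blast
qed

lemma card_cofaces_link:
  assumes "simplicial_complex X" "\<rho> \<in> link X {p}"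
  shows "card {\<tau> \<in> link X {p}. card \<tau> = k \<and> \<rho> \<subseteq> \<tau>}
       = card {T \<in> X. card T = Suc k \<and> insert p \<rho> \<subseteq> T}"
proof -
  let ?A = "{\<tau> \<in> link X {p}. card \<tau> = k \<and> \<rho> \<subseteq> \<tau>}"
  have inj: "inj_on (insert p) ?A"
  proof (rule inj_onI)
    fix \<sigma> \<tau> assume "\<sigma> \<in> ?A" "\<tau> \<in> ?A" "insert p \<sigma> = insert p \<tau>"
    then show "\<sigma> = \<tau>"
      using insert_ident[of p \<sigma> \<tau>] by (simp add: link_singleton_iff)
  qed
  have image: "insert p ` ?A = {T \<in> X. card T = Suc k \<and> insert p \<rho> \<subseteq> T}"
  proof
    show "insert p ` ?A \<subseteq> {T \<in> X. card T = Suc k \<and> insert p \<rho> \<subseteq> T}"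
    proof
      fix T assume "T \<in> insert p ` ?A"
      then obtain \<tau> where \<tau>: "\<tau> \<in> link X {p}" "card \<tau> = k" "\<rho> \<subseteq> \<tau>" "T = insert p \<tau>"
        by blast
      then have "\<tau> \<in> X" "p \<notin> \<tau>" "insert p \<tau> \<in> X"
        by (simp_all add: link_singleton_iff)
      moreover have "finite \<tau>"
        using simplicial_complex_finite_face[OF assms(1) \<open>\<tau> \<in> X\<close>] .
      ultimately show "T \<in> {T \<in> X. card T = Suc k \<and> insert p \<rho> \<subseteq> T}"
        using \<tau> by auto
    qed
    show "{T \<in> X. card T = Suc k \<and> insert p \<rho> \<subseteq> T} \<subseteq> insert p ` ?A"
    proof
      fix T assume T: "T \<in> {T \<in> X. card T = Suc k \<and> insert p \<rho> \<subseteq> T}"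
      then have "T - {p} \<in> ?A"
        using assms simplicial_complex_downward_closed[OF assms(1), of T "T - {p}"]
          simplicial_complex_finite_face[OF assms(1), of T]
        by (auto simp: link_singleton_iff insert_absorb)
      moreover have "T = insert p (T - {p})"
        using T by auto
      ultimately show "T \<in> insert p ` ?A" by blast
    qed
  qed
  show ?thesis
    using card_image[OF inj] image by simp
qed

lemma face_subset_facet:
  assumes "simplicial_complex X" "\<sigma> \<in> X" shows "\<exists>F\<in>facets X. \<sigma> \<subseteq> F"
proof -
  obtain F where "F \<in> X" "\<sigma> \<subseteq> F" "\<forall>G\<in>X. F \<subseteq> G \<longrightarrow> F = G"
    using finite_has_maximal2[of X \<sigma>] assms by (auto simp: simplicial_complex_def)
  then show ?thesis
    unfolding facets_def by blast
qed

lemma card_face_le: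
  assumes "simplicial_complex X" "pure_dim X d" "\<sigma> \<in> X" shows "card \<sigma> \<le> d + 1"
proof -
  obtain F where F: "F \<in> facets X" "\<sigma> \<subseteq> F"
    using face_subset_facet[OF assms(1,3)] by blast
  moreover have "finite F"
    using F(1) simplicial_complex_finite_face[OF assms(1)] by (simp add: facets_def)
  ultimately show ?thesis
    using assms(2) card_mono[of F \<sigma>] by (simp add: pure_dim_def)
qed

lemma pure_dim_link:
  assumes "simplicial_complex X" "pure_dim X (Suc d)" "{p} \<in> X"
  shows "pure_dim (link X {p}) d"
proof -
  have card_facet: "card \<tau> = d + 1" if "\<tau> \<in> facets (link X {p})" for \<tau>
  proof -
    have "p \<notin> \<tau>" "insert p \<tau> \<in> facets X"
      using that facets_link_singleton[OF assms(1)] by blast+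
    moreover have "finite \<tau>"
      using that simplicial_complex_finite_face[OF assms(1)] link_subset
      by (auto simp: facets_def)
    moreover have "card (insert p \<tau>) = Suc d + 1"
      using assms(2) \<open>insert p \<tau> \<in> facets X\<close> by (simp add: pure_dim_def)
    ultimately show ?thesis
      by simp
  qed
  obtain F where "F \<in> facets X" "p \<in> F"
    using face_subset_facet[OF assms(1,3)] by blast
  then have "F - {p} \<in> facets (link X {p})"
    using facets_link_singleton[OF assms(1), of "F - {p}" p] by (simp add: insert_absorb)
  then have "\<exists>\<sigma>\<in>link X {p}. card \<sigma> = d + 1"
    using card_facet unfolding facets_def by blast
  then show ?thesis
    using card_facet by (simp add: pure_dim_def)
qed

lemma normal_pseudomanifold_simplicial_complex:
  "normal_pseudomanifold X d \<Longrightarrow> simplicial_complex X"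
  by (simp add: normal_pseudomanifold_def)

lemma normal_pseudomanifold_vertices_nonempty:
  "normal_pseudomanifold X d \<Longrightarrow> vertices X \<noteq> {}"
  unfolding normal_pseudomanifold_def pure_dim_def vertices_def by fastforce

lemma normal_pseudomanifold_connected:
  assumes "normal_pseudomanifold X d" shows "connected_cx X"
proof -
  obtain \<sigma> where "\<sigma> \<in> X"
    using assms by (auto simp: normal_pseudomanifold_def pure_dim_def)
  then have "{} \<in> X"
    using simplicial_complex_downward_closed[OF normal_pseudomanifold_simplicial_complex[OF assms]]
    by blast
  then have "connected_cx (link X {})"
    using assms by (simp add: normal_pseudomanifold_def)
  moreover have "link X {} = X"
    by (auto simp: link_def)
  ultimately show ?thesis by simp
qed

lemma normal_pseudomanifold_link:
  assumes npm: "normal_pseudomanifold X (Suc d)" and "d \<ge> 1" and "{p} \<in> X"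
  shows "normal_pseudomanifold (link X {p}) d"
proof -
  have X: "simplicial_complex X" "pure_dim X (Suc d)"
    using npm by (simp_all add: normal_pseudomanifold_def)
  have in_X: "p \<notin> \<sigma>" "insert p \<sigma> \<in> X" "finite \<sigma>" if "\<sigma> \<in> link X {p}" for \<sigma>
    using that simplicial_complex_finite_face[OF X(1)] by (auto simp: link_singleton_iff)
  have ridge: "card {\<tau> \<in> link X {p}. card \<tau> = d + 1 \<and> \<rho> \<subseteq> \<tau>} = 2"
    if "\<rho> \<in> link X {p}" "card \<rho> = d" for \<rho>
  proof -
    have "card (insert p \<rho>) = Suc d"
      using in_X[OF that(1)] that(2) by simp
    then have "card {T \<in> X. card T = Suc d + 1 \<and> insert p \<rho> \<subseteq> T} = 2"
      using npm in_X[OF that(1)] unfolding normal_pseudomanifold_def by blast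
    then show ?thesis
      using card_cofaces_link[OF X(1) that(1), of "d + 1"] by simp
  qed
  have connected: "connected_cx (link (link X {p}) \<sigma>)"
    if "\<sigma> \<in> link X {p}" "card \<sigma> \<le> d - 1" for \<sigma>
  proof -
    have "card (insert p \<sigma>) \<le> Suc d - 1"
      using in_X[OF that(1)] that(2) \<open>d \<ge> 1\<close> by simp
    then have "connected_cx (link X (insert p \<sigma>))"
      using npm in_X[OF that(1)] unfolding normal_pseudomanifold_def by blast
    then show ?thesis
      using link_link[OF X(1) that(1)] by simp
  qed
  show ?thesis
    unfolding normal_pseudomanifold_def
    using \<open>d \<ge> 1\<close> simplicial_complex_link[OF X(1)] pure_dim_link[OF X assms(3)] ridge connected
    by blast
qed

lemma card_vertices_eq_card_singletons:
  assumes "simplicial_complex X" shows "card (vertices X) = card {\<sigma> \<in> X. card \<sigma> = 1}"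
proof -
  have "{\<sigma> \<in> X. card \<sigma> = 1} = (\<lambda>x. {x}) ` vertices X"
    by (auto simp: card_1_singleton_iff singleton_in_complex_iff[OF assms])
  then show ?thesis
    by (simp add: card_image inj_on_def)
qed

lemma link_normal_pseudomanifold_1:
  assumes npm: "normal_pseudomanifold X 1" and "{p} \<in> X"
  shows "\<exists>a b. a \<noteq> b \<and> link X {p} = {{}, {a}, {b}}"
proof -
  let ?L = "link X {p}"
  have X: "simplicial_complex X" "pure_dim X (Suc 0)"
    using npm by (simp_all add: normal_pseudomanifold_def)
  have L: "simplicial_complex ?L" "pure_dim ?L 0"
    using simplicial_complex_link[OF X(1)] pure_dim_link[OF X assms(2)] by blast+
  have "{} \<in> ?L"
    using assms(2) simplicial_complex_downward_closed[OF X(1)] by (auto simp: link_singleton_iff)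
  have "card {T \<in> X. card T = 2 \<and> {p} \<subseteq> T} = 2"
  proof -
    have "\<forall>\<sigma>\<in>X. card \<sigma> = 1 \<longrightarrow> card {\<tau> \<in> X. card \<tau> = 1 + 1 \<and> \<sigma> \<subseteq> \<tau>} = 2"
      using npm unfolding normal_pseudomanifold_def by blast
    from bspec[OF this assms(2)] show ?thesis
      by (simp add: numeral_2_eq_2)
  qed
  then have "card {\<sigma> \<in> ?L. card \<sigma> = 1} = 2"
    using card_cofaces_link[OF X(1) \<open>{} \<in> ?L\<close>, of 1] by (simp add: numeral_2_eq_2)
  then have "card (vertices ?L) = 2"
    using card_vertices_eq_card_singletons[OF L(1)] by simp
  then obtain a b where ab: "vertices ?L = {a, b}" "a \<noteq> b"
    by (meson card_2_iff)
  have "\<sigma> \<in> {{}, {a}, {b}}" if "\<sigma> \<in> ?L" for \<sigma>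
  proof -
    have "card \<sigma> \<le> 1" "\<sigma> \<subseteq> {a, b}"
      using card_face_le[OF L that] face_subset_vertices[OF that] ab(1) by simp_all
    moreover have "finite \<sigma>"
      using simplicial_complex_finite_face[OF L(1) that] .
    ultimately show ?thesis
      by (auto simp: card_le_Suc0_iff_eq)
  qed
  moreover have "{a} \<in> ?L" "{b} \<in> ?L"
    using ab(1) singleton_in_complex_iff[OF L(1)] by auto
  ultimately show ?thesis
    using \<open>{} \<in> ?L\<close> ab(2) by blast
qed

lemma card_neighbours_normal_pseudomanifold_1:
  assumes "normal_pseudomanifold X 1" "w \<in> vertices X"
  shows "card {z. adj X w z} = 2"
proof -
  have X: "simplicial_complex X"
    using assms(1) by (rule normal_pseudomanifold_simplicial_complex)
  obtain a b where "a \<noteq> b" "link X {w} = {{}, {a}, {b}}"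
    using link_normal_pseudomanifold_1[OF assms(1)] assms(2) singleton_in_complex_iff[OF X] by blast
  then have "{z. adj X w z} = {a, b}"
    using vertices_link_singleton[OF X, of w] by (auto simp: vertices_def)
  then show ?thesis
    using \<open>a \<noteq> b\<close> by simp
qed

lemma induced_subcomplex_link:
  assumes "simplicial_complex M" "induced_subcomplex N M" "p \<in> vertices N"
  shows "induced_subcomplex (link N {p}) (link M {p})"
  unfolding induced_subcomplex_def
proof
  show "link N {p} \<subseteq> induced (link M {p}) (vertices (link N {p}))"
    using induced_subcomplex_subset[OF assms(2)] face_subset_vertices
    by (auto simp: induced_def link_singleton_iff)
  show "induced (link M {p}) (vertices (link N {p})) \<subseteq> link N {p}"
  proof
    fix \<beta> assume "\<beta> \<in> induced (link M {p}) (vertices (link N {p}))"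
    moreover have "vertices (link N {p}) \<subseteq> vertices N"
      by (rule vertices_mono[OF link_subset])
    ultimately have "\<beta> \<in> M" "p \<notin> \<beta>" "insert p \<beta> \<in> M" "\<beta> \<subseteq> vertices N"
      by (auto simp: induced_def link_singleton_iff)
    then show "\<beta> \<in> link N {p}"
      using assms(3) induced_subcomplexD[OF assms(2)] by (simp add: link_singleton_iff)
  qed
qed

lemma vertices_complement_link:
  assumes "simplicial_complex M" "induced_subcomplex N M" "p \<in> vertices N"
  shows "vertices (simp_complement (link N {p}) (link M {p})) = {z. adj M p z} - vertices N"
proof -
  have "simplicial_complex N"
    using assms(1,2) by (rule simplicial_complex_induced_subcomplex)
  then have "vertices (simp_complement (link N {p}) (link M {p})) = {z. adj M p z} - {z. adj N p z}"
    using assms(1)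
    by (simp add: vertices_simp_complement simplicial_complex_link vertices_link_singleton)
  also have "\<dots> = {z. adj M p z} - vertices N"
    using adj_induced_subcomplex[OF assms(2)] assms(3) by auto
  finally show ?thesis .
qed

lemma adj_complement_link:
  assumes "simplicial_complex M" "induced_subcomplex N M" "p \<in> vertices N"
    and "adj (simp_complement (link N {p}) (link M {p})) x y"
  shows "adj (simp_complement N M) x y"
proof -
  have "x \<notin> vertices N" "y \<notin> vertices N"
    using adj_vertices[OF assms(4)] vertices_complement_link[OF assms(1-3)] by auto
  moreover have "adj M x y"
    using assms(4) adj_mono[OF link_subset] by (auto simp: adj_simp_complement)
  ultimately show ?thesis
    by (simp add: adj_simp_complement)
qed

subsection \<open>Paths that leave a subcomplex at once\<close>

definition reach_via_complement :: "'a set set \<Rightarrow> 'a set set \<Rightarrow> 'a \<Rightarrow> 'a \<Rightarrow> bool" where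
  "reach_via_complement M N u v \<longleftrightarrow>
     (\<exists>c. adj M u c \<and> c \<notin> vertices N \<and> (adj (simp_complement N M))\<^sup>*\<^sup>* c v)"

definition complement_reachable :: "'a set set \<Rightarrow> 'a set set \<Rightarrow> bool" where
  "complement_reachable M N \<longleftrightarrow>
     (\<forall>u\<in>vertices N. \<forall>v\<in>vertices (simp_complement N M). reach_via_complement M N u v)"

lemma edge_path_of_reach_via_complement:
  assumes "simplicial_complex M" "reach_via_complement M N u v" "u \<in> vertices N"
  shows "\<exists>p. edge_path M p u v \<and> (\<forall>x\<in>set p. x \<in> vertices N \<longrightarrow> x = u)"
proof -
  let ?C = "simp_complement N M"
  obtain c where c: "adj M u c" "c \<notin> vertices N" "(adj ?C)\<^sup>*\<^sup>* c v"
    using assms(2) by (auto simp: reach_via_complement_def)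
  have "c \<in> vertices ?C"
    using adj_vertices[OF c(1)] c(2) vertices_simp_complement[OF assms(1)] by simp
  then obtain p where p: "edge_path ?C p c v"
    using edge_path_of_rtranclp[OF c(3)] by blast
  have p_out: "set p \<subseteq> vertices M - vertices N"
    using p vertices_simp_complement[OF assms(1)] by (simp add: edge_path_def)
  have "?C \<subseteq> M"
    by (simp add: simp_complement_def induced_subset)
  moreover have "u \<notin> set p"
    using p_out assms(3) by blast
  ultimately have "edge_path M (u # p) u v"
    using edge_path_Cons[OF edge_path_mono[OF _ p] c(1)] by blast
  moreover have "\<forall>x\<in>set (u # p). x \<in> vertices N \<longrightarrow> x = u"
    using p_out by auto
  ultimately show ?thesis by blast
qed

lemma ex_reach_via_complement:
  assumes "K \<subseteq> M" "(adj K)\<^sup>*\<^sup>* v w" "v \<notin> vertices N" "w \<in> vertices N"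
  shows "\<exists>u\<in>vertices N \<inter> vertices K. reach_via_complement M N u v"
proof -
  let ?C = "simp_complement N M"
  have "\<exists>u\<in>vertices N \<inter> vertices K. reach_via_complement M N u v"
    if "(adj K)\<^sup>*\<^sup>* x w" "x \<notin> vertices N" "(adj ?C)\<^sup>*\<^sup>* x v" for x
    using that
  proof (induction rule: converse_rtranclp_induct)
    case base
    then show ?case using assms(4) by simp
  next
    case (step x y)
    have "adj M y x"
      using adj_mono[OF assms(1) step.hyps(1)] by (simp add: adj_commute)
    show ?case
    proof (cases "y \<in> vertices N")
      case True
      then show ?thesis
        using \<open>adj M y x\<close> step.prems adj_vertices[OF step.hyps(1)]
        unfolding reach_via_complement_def by blast
    next
      case False
      then have "adj ?C y x"
        using \<open>adj M y x\<close> step.prems(1) by (simp add: adj_simp_complement)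
      then have "(adj ?C)\<^sup>*\<^sup>* y v"
        using step.prems(2) by (rule converse_rtranclp_into_rtranclp)
      then show ?thesis
        using step.IH False by blast
    qed
  qed
  then show ?thesis
    using assms(2,3) by blast
qed

lemma reach_via_complement_adj:
  assumes "simplicial_complex M" "induced_subcomplex N M" "adj N p q"
    and "reach_via_complement M N p v"
    and "complement_reachable (link M {p}) (link N {p})"
  shows "reach_via_complement M N q v"
proof -
  let ?C = "simp_complement N M" and ?CL = "simp_complement (link N {p}) (link M {p})"
  have p: "p \<in> vertices N"
    using adj_vertices[OF assms(3)] by blast
  obtain c where c: "adj M p c" "c \<notin> vertices N" "(adj ?C)\<^sup>*\<^sup>* c v"
    using assms(4) by (auto simp: reach_via_complement_def)
  have "c \<in> vertices ?CL"
    using c vertices_complement_link[OF assms(1,2) p] by blast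
  moreover have "q \<in> vertices (link N {p})"
    using vertices_link_singleton[OF simplicial_complex_induced_subcomplex[OF assms(1,2)]] assms(3)
    by blast
  ultimately obtain c' where
    c': "adj (link M {p}) q c'" "c' \<notin> vertices (link N {p})" "(adj ?CL)\<^sup>*\<^sup>* c' c"
    using assms(5) by (auto simp: complement_reachable_def reach_via_complement_def)
  have "c' \<in> vertices ?CL"
    using adj_vertices[OF c'(1)] c'(2)
      vertices_simp_complement[OF simplicial_complex_link[OF assms(1)]] by blast
  then have "c' \<notin> vertices N"
    using vertices_complement_link[OF assms(1,2) p] by blast
  have "(adj ?C)\<^sup>*\<^sup>* c' c"
    using mono_rtranclp[of "adj ?CL" "adj ?C"] adj_complement_link[OF assms(1,2) p] c'(3) by blast
  then have "(adj ?C)\<^sup>*\<^sup>* c' v"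
    using c(3) by (rule rtranclp_trans)
  then show ?thesis
    using \<open>c' \<notin> vertices N\<close> adj_mono[OF link_subset c'(1)]
    unfolding reach_via_complement_def by blast
qed

subsection \<open>Deleting a vertex from a one-dimensional normal pseudomanifold\<close>

lemma even_card_sym_irrefl:
  assumes "finite P" "sym P" "irrefl P"
  shows "even (card P)"
  using assms
proof (induction "card P" arbitrary: P rule: less_induct)
  case less
  show ?case
  proof (cases "P = {}")
    case False
    then obtain x y where "(x, y) \<in> P"
      by auto
    then have sub: "{(x, y), (y, x)} \<subseteq> P" and "x \<noteq> y"
      using less.prems(2,3) by (auto dest: symD irreflD)
    let ?Q = "P - {(x, y), (y, x)}"
    have card: "card P = card ?Q + 2"
      using sub \<open>x \<noteq> y\<close> card_mono[OF less.prems(1) sub] by (simp add: card_Diff_subset)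
    have "sym ?Q" "irrefl ?Q"
      using less.prems(2,3) by (auto intro!: symI irreflI dest: symD irreflD)
    then have "even (card ?Q)"
      using less.hyps card less.prems(1) by simp
    then show ?thesis
      using card by simp
  qed simp
qed

lemma even_sum_degrees:
  assumes "finite H" "symp E" "irreflp E"
  shows "even (\<Sum>x\<in>H. card {y \<in> H. E x y})"
proof -
  let ?P = "SIGMA x:H. {y \<in> H. E x y}"
  have "sym ?P" "irrefl ?P"
    using assms(2,3) by (auto intro!: symI irreflI dest: sympD irreflpD)
  then have "even (card ?P)"
    using assms(1) by (intro even_card_sym_irrefl) auto
  then show ?thesis
    using assms(1) by (simp add: card_SigmaI)
qed

lemma reachable_delete_vertex_vertices:
  assumes "(adj (induced X (vertices X - {b})))\<^sup>*\<^sup>* x w" "x \<in> vertices X - {b}"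
  shows "w \<in> vertices X - {b}"
  using assms by (cases rule: rtranclp.cases) (auto simp: adj_induced)

lemma neighbours_reachable_delete_vertex:
  assumes "(adj (induced X (vertices X - {b})))\<^sup>*\<^sup>* x w" "x \<in> vertices X - {b}"
  shows "{z. (adj (induced X (vertices X - {b})))\<^sup>*\<^sup>* x z \<and> adj X w z} = {z. adj X w z} - {b}"
proof -
  let ?K = "induced X (vertices X - {b})"
  have "w \<in> vertices X - {b}"
    using assms by (rule reachable_delete_vertex_vertices)
  then have "(adj ?K)\<^sup>*\<^sup>* x z" if "adj X w z" "z \<noteq> b" for z
    using that assms(1) adj_vertices[OF that(1)] rtranclp.rtrancl_into_rtrancl[of "adj ?K" x w z]
    by (simp add: adj_induced)
  then show ?thesis
    using reachable_delete_vertex_vertices[OF _ assms(2)] by blast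
qed

text \<open>If \<open>y\<close> were not reachable from \<open>x\<close> in \<open>X - b\<close>, then in the part of \<open>X - b\<close>
  reachable from \<open>x\<close> the vertex \<open>x\<close> would have degree one and all others degree two.\<close>

lemma neighbours_connected_delete_vertex:
  assumes npm: "normal_pseudomanifold X 1" and nbrs: "{z. adj X b z} = {x, y}"
  shows "(adj (induced X (vertices X - {b})))\<^sup>*\<^sup>* x y"
proof (rule ccontr)
  let ?K = "induced X (vertices X - {b})"
  assume not_xy: "\<not> (adj ?K)\<^sup>*\<^sup>* x y"
  define H where "H = {w. (adj ?K)\<^sup>*\<^sup>* x w}"
  have X: "simplicial_complex X"
    using npm by (rule normal_pseudomanifold_simplicial_complex)
  have "adj X b x"
    using nbrs by blast
  then have x: "x \<in> vertices X - {b}"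
    using adj_vertices[OF \<open>adj X b x\<close>] by (auto simp: adj_def)
  have H: "H \<subseteq> vertices X - {b}" and "x \<in> H"
    using reachable_delete_vertex_vertices[OF _ x] by (auto simp: H_def)
  have H_nbrs: "{z \<in> H. adj X w z} = {z. adj X w z} - {b}" if "w \<in> H" for w
    using neighbours_reachable_delete_vertex[OF _ x, of w] that by (simp add: H_def)
  have deg: "card {z. adj X w z} = 2" if "w \<in> H" for w
    using card_neighbours_normal_pseudomanifold_1[OF npm] H that by blast
  have "b \<in> {z. adj X x z}"
    using \<open>adj X b x\<close> adj_commute[of X b x] by blast
  then have "card {z \<in> H. adj X x z} = 1"
    using H_nbrs[OF \<open>x \<in> H\<close>] deg[OF \<open>x \<in> H\<close>] finite_neighbours[OF X]
    by (simp add: card_Diff_singleton)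
  moreover have "card {z \<in> H. adj X w z} = 2" if "w \<in> H - {x}" for w
  proof -
    have "w \<noteq> y"
      using that not_xy by (auto simp: H_def)
    then have "b \<notin> {z. adj X w z}"
      using that nbrs adj_commute[of X w b] by blast
    then show ?thesis
      using that H_nbrs[of w] deg[of w] by simp
  qed
  moreover have "finite H"
    using H finite_vertices[OF X] finite_subset by blast
  ultimately have "(\<Sum>w\<in>H. card {z \<in> H. adj X w z}) = 1 + 2 * card (H - {x})"
    using \<open>x \<in> H\<close> by (simp add: sum.remove)
  moreover have "even (\<Sum>w\<in>H. card {z \<in> H. adj X w z})"
    using \<open>finite H\<close>
    by (rule even_sum_degrees) (auto intro: sympI irreflpI simp: adj_def insert_commute)
  ultimately show False
    by simp
qed

lemma neighbour_reachable_delete_vertex: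
  assumes "(adj X)\<^sup>*\<^sup>* w b" "w \<noteq> b"
  shows "\<exists>z. adj X z b \<and> (adj (induced X (vertices X - {b})))\<^sup>*\<^sup>* w z"
  using assms
proof (induction rule: converse_rtranclp_induct)
  case base
  then show ?case by simp
next
  case (step w w')
  show ?case
  proof (cases "w' = b")
    case True
    then show ?thesis
      using step.hyps(1) by (intro exI[of _ w]) simp
  next
    case False
    then have "adj (induced X (vertices X - {b})) w w'"
      using step.hyps(1) step.prems adj_vertices[OF step.hyps(1)] by (simp add: adj_induced)
    then show ?thesis
      using step.IH[OF False] by (meson converse_rtranclp_into_rtranclp)
  qed
qed

lemma connected_delete_vertex:
  assumes npm: "normal_pseudomanifold X 1" and b: "b \<in> vertices X"
  shows "connected_cx (induced X (vertices X - {b}))"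
proof -
  let ?K = "induced X (vertices X - {b})"
  have X: "simplicial_complex X"
    using npm by (rule normal_pseudomanifold_simplicial_complex)
  obtain x y where nbrs: "{z. adj X b z} = {x, y}"
    using card_neighbours_normal_pseudomanifold_1[OF npm b] by (meson card_2_iff)
  have y_x: "(adj ?K)\<^sup>*\<^sup>* y x"
    using adj_rtranclp_commute[OF neighbours_connected_delete_vertex[OF npm nbrs]] .
  have to_x: "(adj ?K)\<^sup>*\<^sup>* w x" if "w \<in> vertices ?K" for w
  proof -
    have "(adj X)\<^sup>*\<^sup>* w b" "w \<noteq> b"
      using normal_pseudomanifold_connected[OF npm] that b
      by (auto simp: connected_cx_def vertices_induced[OF X])
    then have "\<exists>z. adj X z b \<and> (adj ?K)\<^sup>*\<^sup>* w z"
      by (rule neighbour_reachable_delete_vertex)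
    then obtain z where "adj X z b" and w_z: "(adj ?K)\<^sup>*\<^sup>* w z"
      by blast
    then have "z = x \<or> z = y"
      using nbrs adj_commute[of X z b] by blast
    then have "(adj ?K)\<^sup>*\<^sup>* z x"
      using y_x by auto
    with w_z show ?thesis
      by (rule rtranclp_trans)
  qed
  show ?thesis
    unfolding connected_cx_def
  proof (intro ballI)
    fix u v assume "u \<in> vertices ?K" "v \<in> vertices ?K"
    then have "(adj ?K)\<^sup>*\<^sup>* u x" "(adj ?K)\<^sup>*\<^sup>* x v"
      using to_x adj_rtranclp_commute[OF to_x[of v]] by simp_all
    then show "(adj ?K)\<^sup>*\<^sup>* u v"
      by (rule rtranclp_trans)
  qed
qed

subsection \<open>Induction on the dimension\<close>

text \<open>Passing to links lowers the dimension of \<open>N\<close> down to zero, where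
  \<open>normal_pseudomanifold\<close> (which requires \<open>d \<ge> 1\<close>) is not meaningful: a zero-dimensional
  normal pseudomanifold is a pair of points.\<close>

definition normal_pseudomanifold' :: "'a set set \<Rightarrow> nat \<Rightarrow> bool" where
  "normal_pseudomanifold' X d \<longleftrightarrow>
     (if d = 0 then \<exists>a b. a \<noteq> b \<and> X = {{}, {a}, {b}} else normal_pseudomanifold X d)"

lemma normal_pseudomanifold'_link:
  assumes "normal_pseudomanifold X (Suc d)" "{p} \<in> X"
  shows "normal_pseudomanifold' (link X {p}) d"
proof (cases "d = 0")
  case True
  then show ?thesis
    using link_normal_pseudomanifold_1[of X p] assms by (simp add: normal_pseudomanifold'_def)
next
  case False
  then show ?thesis
    using normal_pseudomanifold_link[OF assms(1) _ assms(2)] by (simp add: normal_pseudomanifold'_def)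
qed

lemma normal_pseudomanifold'_vertices_nonempty:
  assumes "normal_pseudomanifold' X d" shows "vertices X \<noteq> {}"
proof (cases "d = 0")
  case True
  then obtain a b where "X = {{}, {a}, {b}}"
    using assms by (auto simp: normal_pseudomanifold'_def)
  then show ?thesis
    by (auto simp: vertices_def)
next
  case False
  then show ?thesis
    using assms normal_pseudomanifold_vertices_nonempty by (simp add: normal_pseudomanifold'_def)
qed

lemma complement_reachable_pair:
  assumes "normal_pseudomanifold M 1" "induced_subcomplex N M" "vertices N = {a, b}" "a \<noteq> b"
  shows "complement_reachable M N"
proof -
  have M: "simplicial_complex M"
    using assms(1) by (rule normal_pseudomanifold_simplicial_complex)
  have N_M: "vertices N \<subseteq> vertices M"
    using vertices_mono[OF induced_subcomplex_subset[OF assms(2)]] .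
  have "reach_via_complement M N u v"
    if "vertices N = {u, w}" "u \<noteq> w" "v \<in> vertices M - vertices N" for u w v
  proof -
    let ?K = "induced M (vertices M - {w})"
    have K: "vertices ?K = vertices M - {w}"
      by (simp add: vertices_induced[OF M] Diff_eq Int_absorb1)
    have "w \<in> vertices M" "u \<in> vertices ?K" "v \<in> vertices ?K"
      using that N_M K by auto
    then have vu: "(adj ?K)\<^sup>*\<^sup>* v u"
      using connected_delete_vertex[OF assms(1)] by (simp add: connected_cx_def)
    have "v \<notin> vertices N" "u \<in> vertices N"
      using that by auto
    then obtain u' where "u' \<in> vertices N \<inter> vertices ?K" "reach_via_complement M N u' v"
      using ex_reach_via_complement[OF induced_subset vu] by blast
    moreover have "vertices N \<inter> vertices ?K = {u}"
      using that(1,2) K N_M by auto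
    ultimately show ?thesis by simp
  qed
  then show ?thesis
    using assms(3,4) vertices_simp_complement[OF M]
    unfolding complement_reachable_def by (metis insert_commute insert_iff singletonD)
qed

lemma complement_reachable_of_links:
  assumes "simplicial_complex M" "connected_cx M" "induced_subcomplex N M" "connected_cx N"
    and links: "\<And>p. p \<in> vertices N \<Longrightarrow> complement_reachable (link M {p}) (link N {p})"
  shows "complement_reachable M N"
  unfolding complement_reachable_def
proof (intro ballI)
  fix u v assume u: "u \<in> vertices N" and "v \<in> vertices (simp_complement N M)"
  then have v: "v \<in> vertices M - vertices N"
    by (simp add: vertices_simp_complement[OF assms(1)])
  moreover have "u \<in> vertices M"
    using u vertices_mono[OF induced_subcomplex_subset[OF assms(3)]] by blast
  ultimately have "(adj M)\<^sup>*\<^sup>* v u"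
    using assms(2) by (simp add: connected_cx_def)
  then obtain u\<^sub>0 where u\<^sub>0: "u\<^sub>0 \<in> vertices N" "reach_via_complement M N u\<^sub>0 v"
    using ex_reach_via_complement[OF order_refl _ _ u] v by blast
  have "(adj N)\<^sup>*\<^sup>* u\<^sub>0 u"
    using assms(4) u\<^sub>0(1) u by (simp add: connected_cx_def)
  then show "reach_via_complement M N u v"
  proof (induction rule: rtranclp_induct)
    case base
    show ?case by (rule u\<^sub>0(2))
  next
    case (step q q')
    then show ?case
      using reach_via_complement_adj[OF assms(1,3) step.hyps(2) step.IH]
        links adj_vertices[OF step.hyps(2)] by blast
  qed
qed

lemma normal_pseudomanifold_links:
  assumes "normal_pseudomanifold M (Suc (Suc d))" "induced_subcomplex N M"
    and "normal_pseudomanifold N (Suc d)" "p \<in> vertices N"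
  shows "normal_pseudomanifold (link M {p}) (Suc d)"
    and "induced_subcomplex (link N {p}) (link M {p})"
    and "normal_pseudomanifold' (link N {p}) d"
proof -
  have "{p} \<in> N"
    using assms(4) singleton_in_complex_iff[OF normal_pseudomanifold_simplicial_complex[OF assms(3)]]
    by blast
  then show "normal_pseudomanifold' (link N {p}) d"
    by (rule normal_pseudomanifold'_link[OF assms(3)])
  have "{p} \<in> M"
    using \<open>{p} \<in> N\<close> induced_subcomplex_subset[OF assms(2)] by blast
  then show "normal_pseudomanifold (link M {p}) (Suc d)"
    using normal_pseudomanifold_link[OF assms(1)] by simp
  show "induced_subcomplex (link N {p}) (link M {p})"
    using normal_pseudomanifold_simplicial_complex[OF assms(1)] assms(2,4)
    by (rule induced_subcomplex_link)
qed

lemma complement_reachable: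
  assumes "normal_pseudomanifold M (Suc d)" "induced_subcomplex N M" "normal_pseudomanifold' N d"
  shows "complement_reachable M N"
  using assms
proof (induction d arbitrary: M N)
  case 0
  then obtain a b where ab: "a \<noteq> b" "N = {{}, {a}, {b}}"
    by (auto simp: normal_pseudomanifold'_def)
  then have "vertices N = {a, b}"
    by (auto simp: vertices_def)
  then show ?case
    using complement_reachable_pair[of M N a b] 0(1,2) ab(1) by simp
next
  case (Suc d M N)
  have N: "normal_pseudomanifold N (Suc d)"
    using Suc.prems(3) by (simp add: normal_pseudomanifold'_def)
  show ?case
  proof (rule complement_reachable_of_links)
    show "simplicial_complex M" "connected_cx M"
      using Suc.prems(1) by (rule normal_pseudomanifold_simplicial_complex normal_pseudomanifold_connected)+
    show "connected_cx N"
      using N by (rule normal_pseudomanifold_connected)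
    show "complement_reachable (link M {p}) (link N {p})" if "p \<in> vertices N" for p
      using Suc.IH normal_pseudomanifold_links[OF Suc.prems(1,2) N that] by blast
  qed (rule Suc.prems(2))
qed

lemma card_components_complement_le_link:
  assumes "simplicial_complex M" "induced_subcomplex N M" "complement_reachable M N"
    and "p \<in> vertices N"
  shows "card (components (simp_complement N M))
       \<le> card (components (simp_complement (link N {p}) (link M {p})))"
proof (rule card_components_le)
  let ?C = "simp_complement N M" and ?CL = "simp_complement (link N {p}) (link M {p})"
  show "finite (vertices ?CL)"
    using assms(1) by (intro finite_vertices simplicial_complex_simp_complement simplicial_complex_link)
  show "adj ?C x y" if "adj ?CL x y" for x y
    using assms(1,2,4) that by (rule adj_complement_link)
  show "\<exists>s\<in>vertices ?CL. (adj ?C)\<^sup>*\<^sup>* s v" if "v \<in> vertices ?C" for v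
  proof -
    have "reach_via_complement M N p v"
      using assms(3,4) that unfolding complement_reachable_def by blast
    then obtain c where "adj M p c" "c \<notin> vertices N" "(adj ?C)\<^sup>*\<^sup>* c v"
      unfolding reach_via_complement_def by blast
    moreover have "c \<in> vertices ?CL"
      using calculation vertices_complement_link[OF assms(1,2,4)] by blast
    ultimately show ?thesis by blast
  qed
qed

lemma obtain_card_components_complement_le_link:
  assumes "normal_pseudomanifold M (Suc d)" "induced_subcomplex N M" "normal_pseudomanifold' N d"
  obtains u where "u \<in> vertices N" "{u} \<in> M"
    "card (components (simp_complement N M))
       \<le> card (components (simp_complement (link N {u}) (link M {u})))"
proof -
  have M: "simplicial_complex M"
    using assms(1) by (rule normal_pseudomanifold_simplicial_complex)
  obtain u where u: "u \<in> vertices N"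
    using normal_pseudomanifold'_vertices_nonempty[OF assms(3)] by blast
  moreover have "{u} \<in> M"
    using u vertices_mono[OF induced_subcomplex_subset[OF assms(2)]] singleton_in_complex_iff[OF M]
    by blast
  ultimately show ?thesis
    using that card_components_complement_le_link[OF M assms(2) complement_reachable[OF assms] u]
    by blast
qed

lemma card_components_complement_le_2:
  assumes "normal_pseudomanifold M (Suc d)" "induced_subcomplex N M" "normal_pseudomanifold' N d"
  shows "card (components (simp_complement N M)) \<le> 2"
  using assms
proof (induction d arbitrary: M N)
  case (0 M N)
  obtain u where u: "{u} \<in> M" and
    le_link: "card (components (simp_complement N M))
      \<le> card (components (simp_complement (link N {u}) (link M {u})))"
    using obtain_card_components_complement_le_link[OF 0] by blast
  have M: "simplicial_complex M"
    using 0(1) by (rule normal_pseudomanifold_simplicial_complex)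
  let ?CL = "simp_complement (link N {u}) (link M {u})"
  obtain a b where "link M {u} = {{}, {a}, {b}}"
    using normal_pseudomanifold'_link[OF 0(1) u] by (auto simp: normal_pseudomanifold'_def)
  then have "vertices (link M {u}) = {a, b}"
    by (auto simp: vertices_def)
  then have "vertices ?CL \<subseteq> {a, b}"
    using vertices_simp_complement[OF simplicial_complex_link[OF M]] by blast
  have "card (components ?CL) \<le> card (vertices ?CL)"
    using M by (intro card_components_le_card_vertices simplicial_complex_simp_complement
        simplicial_complex_link)
  also have "\<dots> \<le> card {a, b}"
    using \<open>vertices ?CL \<subseteq> {a, b}\<close> by (intro card_mono) simp_all
  also have "\<dots> \<le> 2"
    by (simp add: card_insert_if)
  finally show ?case
    using le_link by simp
next
  case (Suc d M N)
  obtain u where u: "u \<in> vertices N" and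
    le_link: "card (components (simp_complement N M))
      \<le> card (components (simp_complement (link N {u}) (link M {u})))"
    using obtain_card_components_complement_le_link[OF Suc.prems] by blast
  have N: "normal_pseudomanifold N (Suc d)"
    using Suc.prems(3) by (simp add: normal_pseudomanifold'_def)
  have "card (components (simp_complement (link N {u}) (link M {u}))) \<le> 2"
    using Suc.IH normal_pseudomanifold_links[OF Suc.prems(1,2) N u] by blast
  then show ?case
    using le_link by simp
qed

theorem lemma3p3:
  fixes M N :: "'a set set" and d :: nat
  assumes "simplicial_complex M" and "pure_dim M d"
    and "simplicial_complex N" and "pure_dim N (d - 1)"
    and "induced_subcomplex N M"
    and "normal_pseudomanifold M d" and "normal_pseudomanifold N (d - 1)"
  shows "(\<forall>u\<in>vertices N. \<forall>v\<in>vertices (simp_complement N M).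
            \<exists>p. edge_path M p u v \<and> (\<forall>x\<in>set p. x \<in> vertices N \<longrightarrow> x = u))
         \<and> card (components (simp_complement N M)) \<le> 2"
proof -
  have "1 \<le> d - 1"
    using assms(7) unfolding normal_pseudomanifold_def by blast
  then have "d - 1 \<noteq> 0"
    by linarith
  then have M: "normal_pseudomanifold M (Suc (d - 1))"
    using assms(6) by simp
  have N: "normal_pseudomanifold' N (d - 1)"
    using assms(7) \<open>d - 1 \<noteq> 0\<close> unfolding normal_pseudomanifold'_def by simp
  have "complement_reachable M N"
    using M assms(5) N by (rule complement_reachable)
  then have "\<forall>u\<in>vertices N. \<forall>v\<in>vertices (simp_complement N M).
      \<exists>p. edge_path M p u v \<and> (\<forall>x\<in>set p. x \<in> vertices N \<longrightarrow> x = u)"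
    using edge_path_of_reach_via_complement[OF assms(1)] unfolding complement_reachable_def by blast
  moreover have "card (components (simp_complement N M)) \<le> 2"
    using M assms(5) N by (rule card_components_complement_le_2)
  ultimately show ?thesis ..
qed

end
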